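(* For every $n\ge1$, $$\sum_{\sigma\in S_n} q^{\,\mathrm{run}(\sigma)-1+2\,\mathrm{lsg}(\sigma)+\mathrm{rsg}(\sigma)}=[n]_q!,$$ where $\mathrm{lsg}(\sigma)=\sum_{i=1}^n\mathrm{lsg}(i)$ and $\mathrm{rsg}(\sigma)=\sum_{i=1}^n\mathrm{rsg}(i)$.
   Context: $[n]_q=\frac{1-q^n}{1-q}$ and $[n]_q!=[n]_q\cdots[1]_q$. A permutation $\sigma\in S_n$ is written as the word $\sigma(1)\cdots\sigma(n)$; its runs are the maximal contiguous increasing segments of this word, and $\mathrm{run}(\sigma)$ is the number of runs. For $i\in\{1,\dots,n\}$, $\mathrm{lsg}(i)$ is the number of runs of $\sigma$ lying strictly to the left of $i$ (not containing $i$) that contain both an element smaller than $i$ and an element greater than $i$; $\mathrm{rsg}(i)$ is the analogous number of runs strictly to the right of $i$. *)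

theory Defs
  imports "HOL-Combinatorics.Combinatorics"
begin

(* q-integer [n]_q = (1-q^n)/(1-q), written as the polynomial 1 + q + ... + q^(n-1) *)
definition qint :: "'a::comm_ring_1 \<Rightarrow> nat \<Rightarrow> 'a" where
  "qint q n = (\<Sum>j<n. q ^ j)"

definition qfact :: "'a::comm_ring_1 \<Rightarrow> nat \<Rightarrow> 'a" where
  "qfact q n = (\<Prod>k\<in>{1..n}. qint q k)"

fun runs :: "nat list \<Rightarrow> nat list list" where
  "runs [] = []"
| "runs [x] = [[x]]"
| "runs (x # y # xs) = (let r = runs (y # xs) in
      if x < y then (x # hd r) # tl r else [x] # r)"

definition run :: "nat list \<Rightarrow> nat" where
  "run w = length (runs w)"

definition run_idx :: "nat list \<Rightarrow> nat \<Rightarrow> nat" where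
  "run_idx w i = (THE k. k < length (runs w) \<and> i \<in> set (runs w ! k))"

definition straddles :: "nat list \<Rightarrow> nat \<Rightarrow> nat \<Rightarrow> bool" where
  "straddles w k i = ((\<exists>a\<in>set (runs w ! k). a < i) \<and> (\<exists>b\<in>set (runs w ! k). i < b))"

definition lsg_at :: "nat list \<Rightarrow> nat \<Rightarrow> nat" where
  "lsg_at w i = card {k. k < run_idx w i \<and> straddles w k i}"

definition rsg_at :: "nat list \<Rightarrow> nat \<Rightarrow> nat" where
  "rsg_at w i = card {k. run_idx w i < k \<and> k < length (runs w) \<and> straddles w k i}"

definition lsg :: "nat list \<Rightarrow> nat" where
  "lsg w = (\<Sum>i\<in>set w. lsg_at w i)"

definition rsg :: "nat list \<Rightarrow> nat" where
  "rsg w = (\<Sum>i\<in>set w. rsg_at w i)"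

end

(*
  Put a marker N = n + 1 in front of the permutation. More generally, consider marked words:
  words that start with N, contain every letter of a set A of letters below N exactly once and
  h + 1 copies of N, no two of them adjacent. Give every letter x other than N the weight: 1 if
  it follows a larger letter, plus twice the number of adjacent ascents a < x < b to its left,
  plus the number of those to its right. A run straddles x exactly when it contains such an
  ascent, so the total weight of N # w is run w + 2 lsg w + rsg w, the descent after N
  accounting for the missing - 1.

  In a marked word the largest letter m of A sits in a block m, m N, N m or N m N, and
  collapsing that block to a single N gives a marked word on the remaining letters; recording
  the block and the marker it came from makes this a bijection. The weights of the other
  letters do not change, and as every marker but the first is preceded by a smaller letter, the
  weight of m only depends on the numbers of markers before and after it. Summing over the
  replaced marker gives a three-term recurrence in h for the generating functions, which is
  also satisfied by T h + T (h - 1) with T k = q ^ (k (k + 3) / 2) [|A|]_q! [|A| - 1 choose k]_q.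
  At h = 0 this is [n]_q!.
*)

theory Submission
  imports Defs
begin

section \<open>q-integers, q-binomial coefficients and the closed form\<close>

lemma qint_0 [simp]: "qint q 0 = 0"
  by (simp add: qint_def)

lemma qint_add: "qint q (a + b) = qint q a + q ^ a * qint q b"
  by (induction b) (simp_all add: qint_def algebra_simps power_add)

lemma qfact_Suc: "qfact q (Suc n) = qint q (Suc n) * qfact q n"
  by (simp add: qfact_def atLeastAtMostSuc_conv mult.commute)

fun qbinom :: "'a::comm_ring_1 \<Rightarrow> nat \<Rightarrow> nat \<Rightarrow> 'a" where
  "qbinom q 0 k = (if k = 0 then 1 else 0)"
| "qbinom q (Suc n) 0 = 1"
| "qbinom q (Suc n) (Suc k) = qbinom q n k + q ^ Suc k * qbinom q n (Suc k)"

lemma qbinom_0_right [simp]: "qbinom q n 0 = 1"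
  by (cases n) auto

lemma qbinom_eq_0: "n < k \<Longrightarrow> qbinom q n k = 0"
  by (induction q n k rule: qbinom.induct) auto

lemma qint_Suc_split: "k \<le> n \<Longrightarrow> qint q (Suc k) + q ^ Suc k * qint q (n - k) = qint q (Suc n)"
  using qint_add[of q "Suc k" "n - k"] by simp

lemma qint_Suc_times_qbinom_of_diff:
  assumes diff: "\<And>k. qint q (n - k) * qbinom q n k = qint q (Suc k) * qbinom q n (Suc k)"
  shows "qint q (Suc k) * qbinom q (Suc n) (Suc k) = qint q (Suc n) * qbinom q n k"
proof (cases "k \<le> n")
  case True
  have "qint q (Suc k) * qbinom q (Suc n) (Suc k)
      = qint q (Suc k) * qbinom q n k + q ^ Suc k * (qint q (Suc k) * qbinom q n (Suc k))"
    by (simp add: algebra_simps)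
  also have "\<dots> = (qint q (Suc k) + q ^ Suc k * qint q (n - k)) * qbinom q n k"
    using diff[of k] by (simp add: algebra_simps)
  also have "qint q (Suc k) + q ^ Suc k * qint q (n - k) = qint q (Suc n)"
    by (rule qint_Suc_split[OF True])
  finally show ?thesis .
qed (simp add: qbinom_eq_0)

lemma qint_diff_times_qbinom: "qint q (n - k) * qbinom q n k = qint q (Suc k) * qbinom q n (Suc k)"
proof (induction n arbitrary: k)
  case (Suc n)
  note absorb = qint_Suc_times_qbinom_of_diff[OF Suc.IH]
  show ?case
  proof (cases k)
    case 0
    then show ?thesis using absorb[of 0] by (simp add: qint_def)
  next
    case (Suc k')
    show ?thesis
    proof (cases "k' \<le> n")
      case True
      have "qint q (n - k') * qbinom q (Suc n) (Suc k')
          = qint q (n - k') * qbinom q n k' + q ^ Suc k' * (qint q (n - k') * qbinom q n (Suc k'))"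
        by (simp add: algebra_simps)
      also have "\<dots> = (qint q (Suc k') + q ^ Suc k' * qint q (n - k')) * qbinom q n (Suc k')"
        using Suc.IH[of k'] by (simp add: algebra_simps)
      also have "qint q (Suc k') + q ^ Suc k' * qint q (n - k') = qint q (Suc n)"
        by (rule qint_Suc_split[OF True])
      finally show ?thesis
        using absorb[of "Suc k'"] Suc by simp
    qed (use Suc in \<open>simp add: qbinom_eq_0\<close>)
  qed
qed simp

lemma qint_Suc_times_qbinom:
  "qint q (Suc k) * qbinom q (Suc n) (Suc k) = qint q (Suc n) * qbinom q n k"
  by (rule qint_Suc_times_qbinom_of_diff[OF qint_diff_times_qbinom])

lemma qbinom_Suc_Suc_expand:
  "qbinom q (Suc (Suc n)) (Suc k) = (if k = 0 then 0 else qbinom q n (k - 1))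
     + (q ^ k + q ^ Suc k) * qbinom q n k + q ^ Suc k * q ^ Suc k * qbinom q n (Suc k)"
  by (cases k) (simp_all add: algebra_simps)

fun gf_exp :: "nat \<Rightarrow> nat" where
  "gf_exp 0 = 0"
| "gf_exp (Suc k) = gf_exp k + k + 2"

definition gf_term :: "'a::comm_ring_1 \<Rightarrow> nat \<Rightarrow> nat \<Rightarrow> 'a" where
  "gf_term q m k = q ^ gf_exp k * qfact q m * qbinom q (m - 1) k"

definition closed_gf :: "'a::comm_ring_1 \<Rightarrow> nat \<Rightarrow> nat \<Rightarrow> 'a" where
  "closed_gf q m h = gf_term q m h + (if h = 0 then 0 else gf_term q m (h - 1))"

definition asc_weight :: "'a::comm_ring_1 \<Rightarrow> nat \<Rightarrow> 'a" where
  "asc_weight q h = q ^ (h - 1) * qint q h"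

definition desc_weight :: "'a::comm_ring_1 \<Rightarrow> nat \<Rightarrow> 'a" where
  "desc_weight q h = q ^ Suc h * qint q (Suc h)"

lemma gf_term_Suc:
  assumes "m \<ge> 1"
  shows "gf_term q (Suc m) k
    = asc_weight q (Suc k) * closed_gf q m (Suc k) + desc_weight q k * closed_gf q m k"
proof -
  obtain n where m: "m = Suc n" using assms by (cases m) auto
  have "gf_term q (Suc m) k
      = q ^ gf_exp k * qfact q m * (qint q (Suc k) * qbinom q (Suc m) (Suc k))"
    using qint_Suc_times_qbinom[of q k m] by (simp add: gf_term_def qfact_Suc m algebra_simps)
  then show ?thesis
    unfolding m qbinom_Suc_Suc_expand
    by (cases k)
      (simp_all add: gf_term_def closed_gf_def asc_weight_def desc_weight_def
        algebra_simps power_add)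
qed

lemma closed_gf_Suc:
  assumes "m \<ge> 1"
  shows "closed_gf q (Suc m) h = asc_weight q (Suc h) * closed_gf q m (Suc h)
           + (asc_weight q h + desc_weight q h) * closed_gf q m h
           + (if h = 0 then 0 else desc_weight q (h - 1) * closed_gf q m (h - 1))"
  using gf_term_Suc[OF assms, of q h] gf_term_Suc[OF assms, of q "h - 1"]
  by (cases h) (simp_all add: closed_gf_def asc_weight_def algebra_simps)

lemma closed_gf_1: "closed_gf q 1 h = (if h \<le> 1 then 1 else 0)"
  by (simp add: closed_gf_def gf_term_def qfact_def qint_def qbinom_eq_0)

lemma closed_gf_0_right: "m \<ge> 1 \<Longrightarrow> closed_gf q m 0 = qfact q m"
  by (simp add: closed_gf_def gf_term_def)

section \<open>Runs and straddling ascents\<close>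

lemma distinct_concat_nth_disjoint:
  assumes "distinct (concat xss)" "i < length xss" "j < length xss" "i < j"
  shows "set (xss ! i) \<inter> set (xss ! j) = {}"
proof -
  have "concat xss = concat (take i xss) @ xss ! i @ concat (drop (Suc i) xss)"
    using assms(2) by (subst id_take_nth_drop[of i xss]) simp_all
  then have "set (xss ! i) \<inter> set (concat (drop (Suc i) xss)) = {}"
    using assms(1) by (metis distinct_append)
  moreover have "xss ! j \<in> set (drop (Suc i) xss)"
    using assms by (auto simp: in_set_conv_nth intro!: exI[where x="j - Suc i"])
  ultimately show ?thesis
    by auto
qed

lemma length_filter_take:
  "j \<le> length xs \<Longrightarrow> length (filter P (take j xs)) = card {k. k < j \<and> P (xs ! k)}"
  by (auto simp: length_filter_conv_card min_def intro!: arg_cong[where f=card])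

lemma length_filter_drop:
  "length (filter P (drop j xs)) = card {k. j \<le> k \<and> k < length xs \<and> P (xs ! k)}"
proof -
  have "{k. j \<le> k \<and> k < length xs \<and> P (xs ! k)}
      = (\<lambda>k. k + j) ` {k. k < length xs - j \<and> P (xs ! (k + j))}"
  proof (intro set_eqI iffI)
    fix k assume "k \<in> {k. j \<le> k \<and> k < length xs \<and> P (xs ! k)}"
    then show "k \<in> (\<lambda>k. k + j) ` {k. k < length xs - j \<and> P (xs ! (k + j))}"
      by (intro image_eqI[where x="k - j"]) auto
  qed auto
  then show ?thesis
    by (auto simp: length_filter_conv_card card_image inj_on_def add.commute
        intro!: arg_cong[where f=card])
qed

lemma runs_not_Nil: "w \<noteq> [] \<Longrightarrow> runs w \<noteq> []"
  by (induction w rule: runs.induct) (auto simp: Let_def)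

lemma runs_Cons:
  "w \<noteq> [] \<Longrightarrow> runs (x # w) = (if x < hd w then (x # hd (runs w)) # tl (runs w) else [x] # runs w)"
  by (cases w) (auto simp: Let_def)

lemma concat_runs [simp]: "concat (runs w) = w"
proof (induction w rule: runs.induct)
  case (3 x y xs)
  then show ?case
    using runs_not_Nil[of "y # xs"] by (cases "runs (y # xs)") (auto simp: Let_def)
qed auto

lemma Nil_notin_runs: "[] \<notin> set (runs w)"
proof (induction w rule: runs.induct)
  case (3 x y xs)
  then show ?case
    using runs_not_Nil[of "y # xs"] by (cases "runs (y # xs)") (auto simp: Let_def)
qed auto

lemma first_run_ge: "runs w = r # rs \<Longrightarrow> c \<in> set r \<Longrightarrow> hd w \<le> c"
proof (induction w arbitrary: r rs rule: runs.induct)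
  case (3 x y xs)
  then show ?case
    using runs_not_Nil[of "y # xs"]
    by (cases "runs (y # xs)") (fastforce simp: Let_def split: if_splits)+
qed auto

lemma hd_in_first_run: "runs w = r # rs \<Longrightarrow> hd w \<in> set r"
  using concat_runs[of w] Nil_notin_runs[of w] by (cases r) auto

fun descents :: "nat list \<Rightarrow> nat" where
  "descents (a # b # l) = (if a < b then 0 else 1) + descents (b # l)"
| "descents _ = 0"

lemma length_runs: "w \<noteq> [] \<Longrightarrow> length (runs w) = Suc (descents w)"
proof (induction w rule: runs.induct)
  case (3 x y xs)
  then show ?case
    using runs_not_Nil[of "y # xs"] by (cases "runs (y # xs)") (auto simp: Let_def)
qed auto

declare runs.simps(3) [simp del]

lemma runs_Cons_less:
  assumes "w \<noteq> []" "x < hd w"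
  obtains r rs where "runs w = r # rs" "runs (x # w) = (x # r) # rs"
  using runs_not_Nil[OF assms(1)] runs_Cons[OF assms(1), of x] assms(2)
  by (cases "runs w") auto

lemma runs_Cons_not_less: "w \<noteq> [] \<Longrightarrow> \<not> x < hd w \<Longrightarrow> runs (x # w) = [x] # runs w"
  by (simp add: runs_Cons)

lemma run_minus_1_eq_descents: "w \<noteq> [] \<Longrightarrow> run w - 1 = descents w"
  by (simp add: run_def length_runs)

lemma run_idx_eq:
  assumes "distinct w" "k < length (runs w)" "i \<in> set (runs w ! k)"
  shows "run_idx w i = k"
  unfolding run_idx_def
proof (rule the_equality)
  fix k' assume k': "k' < length (runs w) \<and> i \<in> set (runs w ! k')"
  show "k' = k"
  proof (rule ccontr)
    assume "k' \<noteq> k"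
    then show False
      using distinct_concat_nth_disjoint[of "runs w" k k']
        distinct_concat_nth_disjoint[of "runs w" k' k]
        assms k' by (auto simp: linorder_neq_iff)
  qed
qed (use assms in simp)

lemma run_idx_in_runs:
  assumes "distinct w" "i \<in> set w"
  shows "run_idx w i < length (runs w)" "i \<in> set (runs w ! run_idx w i)"
proof -
  have "i \<in> set (concat (runs w))"
    using assms(2) by simp
  then obtain r where "r \<in> set (runs w)" "i \<in> set r"
    by (auto simp del: concat_runs)
  then obtain k where "k < length (runs w)" "i \<in> set (runs w ! k)"
    by (auto simp: in_set_conv_nth)
  then show "run_idx w i < length (runs w)" "i \<in> set (runs w ! run_idx w i)"
    using run_idx_eq[OF assms(1)] by auto
qed

lemma run_idx_hd: "distinct w \<Longrightarrow> w \<noteq> [] \<Longrightarrow> run_idx w (hd w) = 0"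
  using runs_not_Nil[of w] hd_in_first_run[of w] by (intro run_idx_eq) (auto simp: neq_Nil_conv)

lemma run_idx_Cons:
  assumes "distinct (x # w)" "i \<in> set w"
  shows "run_idx (x # w) i = (if x < hd w then run_idx w i else Suc (run_idx w i))"
proof -
  have w: "w \<noteq> []" "distinct w"
    using assms by auto
  note k = run_idx_in_runs[OF w(2) assms(2)]
  show ?thesis
  proof (cases "x < hd w")
    case True
    then obtain r rs where "runs w = r # rs" "runs (x # w) = (x # r) # rs"
      using runs_Cons_less[OF w(1)] by blast
    then show ?thesis
      using True k run_idx_eq[OF assms(1), of "run_idx w i" i] by (cases "run_idx w i") auto
  next
    case False
    then show ?thesis
      using k run_idx_eq[OF assms(1), of "Suc (run_idx w i)" i] runs_Cons_not_less[OF w(1)] by simp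
  qed
qed

definition run_straddles :: "nat list \<Rightarrow> nat \<Rightarrow> bool" where
  "run_straddles r i \<longleftrightarrow> (\<exists>a\<in>set r. a < i) \<and> (\<exists>b\<in>set r. i < b)"

abbreviation straddling_runs :: "nat \<Rightarrow> nat list list \<Rightarrow> nat" where
  "straddling_runs i rs \<equiv> length (filter (\<lambda>r. run_straddles r i) rs)"

lemma straddling_runs_extend_first:
  assumes "b \<in> set r" "\<forall>c\<in>set r. b \<le> c" "a < b" "i \<notin> set r"
  shows "straddling_runs i ((a # r) # rs)
    = straddling_runs i (r # rs) + (if a < i \<and> i < b then 1 else 0)"
proof (cases "i < b")
  case True
  then have "\<not> run_straddles r i"
    using assms(2) by (force simp: run_straddles_def)
  then show ?thesis
    using True assms(1) by (auto simp: run_straddles_def)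
next
  case False
  then have "b < i"
    using assms(1,4) by (cases "b = i") auto
  then show ?thesis
    using assms(1,3) by (auto simp: run_straddles_def)
qed

lemma lsg_at_conv:
  assumes "distinct w" "i \<in> set w"
  shows "lsg_at w i = straddling_runs i (take (run_idx w i) (runs w))"
  using run_idx_in_runs[OF assms]
  by (simp add: lsg_at_def straddles_def run_straddles_def length_filter_take)

lemma rsg_at_conv: "rsg_at w i = straddling_runs i (drop (Suc (run_idx w i)) (runs w))"
  by (simp add: rsg_at_def straddles_def run_straddles_def length_filter_drop Suc_le_eq conj_assoc)

lemma lsg_at_Cons_self: "distinct (x # w) \<Longrightarrow> lsg_at (x # w) x = 0"
  using run_idx_hd[of "x # w"] by (simp add: lsg_at_def)

lemma lsg_at_Cons:
  assumes "distinct (x # w)" "i \<in> set w"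
  shows "lsg_at (x # w) i = lsg_at w i + (if x < i \<and> i < hd w then 1 else 0)"
proof -
  have w: "w \<noteq> []" "distinct w"
    using assms by auto
  note k = run_idx_in_runs[OF w(2) assms(2)]
  note conv = lsg_at_conv[OF assms(1)] lsg_at_conv[OF w(2) assms(2)]
  show ?thesis
  proof (cases "x < hd w")
    case True
    then obtain r rs where r: "runs w = r # rs" "runs (x # w) = (x # r) # rs"
      using runs_Cons_less[OF w(1)] by blast
    show ?thesis
    proof (cases "run_idx w i")
      case 0
      then have "hd w \<le> i"
        using k r first_run_ge by auto
      then show ?thesis
        using conv assms(2) run_idx_Cons[OF assms] True 0 by simp
    next
      case (Suc k')
      have "set (runs w ! 0) \<inter> set (runs w ! Suc k') = {}"
        using distinct_concat_nth_disjoint[of "runs w" 0 "Suc k'"] k w(2) Suc by fastforce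
      then have "i \<notin> set r"
        using k r Suc by auto
      then show ?thesis
        using straddling_runs_extend_first[of "hd w" r x i "take k' rs"] hd_in_first_run[OF r(1)]
          first_run_ge[OF r(1)] conv assms(2) run_idx_Cons[OF assms] True Suc r by simp
    qed
  next
    case False
    then show ?thesis
      using conv assms(2) run_idx_Cons[OF assms] runs_Cons_not_less[OF w(1)]
      by (simp add: run_straddles_def)
  qed
qed

lemma rsg_at_Cons:
  assumes "distinct (x # w)" "i \<in> set w"
  shows "rsg_at (x # w) i = rsg_at w i"
proof -
  have w: "w \<noteq> []"
    using assms(2) by auto
  show ?thesis
  proof (cases "x < hd w")
    case True
    moreover obtain r rs where "runs w = r # rs" "runs (x # w) = (x # r) # rs"
      using runs_Cons_less[OF w True] by blast
    ultimately show ?thesis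
      using run_idx_Cons[OF assms] by (simp add: rsg_at_conv)
  next
    case False
    then show ?thesis
      using run_idx_Cons[OF assms] runs_Cons_not_less[OF w] by (simp add: rsg_at_conv)
  qed
qed

fun straddling_ascents :: "nat \<Rightarrow> nat list \<Rightarrow> nat" where
  "straddling_ascents x (a # b # l)
    = (if a < x \<and> x < b then 1 else 0) + straddling_ascents x (b # l)"
| "straddling_ascents x _ = 0"

lemma straddling_ascents_Cons:
  "straddling_ascents x (a # w)
    = (if w \<noteq> [] \<and> a < x \<and> x < hd w then 1 else 0) + straddling_ascents x w"
  by (cases w) auto

lemma straddling_ascents_eq_straddling_runs:
  "x \<notin> set w \<Longrightarrow> straddling_ascents x w = straddling_runs x (runs w)"
proof (induction w)
  case (Cons a w)
  consider "w = []" | "w \<noteq> []" "\<not> a < hd w" | "w \<noteq> []" "a < hd w"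
    by blast
  then show ?case
  proof cases
    case 1
    then show ?thesis
      by (simp add: run_straddles_def)
  next
    case 2
    then show ?thesis
      using Cons runs_Cons_not_less[of w a]
      by (auto simp: straddling_ascents_Cons run_straddles_def)
  next
    case 3
    then obtain r rs where r: "runs w = r # rs" "runs (a # w) = (a # r) # rs"
      using runs_Cons_less by blast
    have "hd w \<in> set r" "\<forall>c\<in>set r. hd w \<le> c" "x \<notin> set r"
      using r(1) hd_in_first_run first_run_ge Cons.prems concat_runs[of w] by force+
    then show ?thesis
      using Cons 3 straddling_runs_extend_first[of "hd w" r a x rs]
      by (simp add: r straddling_ascents_Cons)
  qed
qed simp

lemma rsg_at_Cons_self:
  assumes "distinct (x # w)"
  shows "rsg_at (x # w) x = straddling_ascents x w"
proof -
  have "rsg_at (x # w) x = straddling_runs x (tl (runs (x # w)))"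
    using run_idx_hd[OF assms] by (simp add: rsg_at_conv drop_Suc)
  also have "\<dots> = straddling_runs x (runs w)"
  proof (cases "w \<noteq> [] \<and> x < hd w")
    case True
    then obtain r rs where r: "runs w = r # rs" "runs (x # w) = (x # r) # rs"
      using runs_Cons_less by blast
    then have "\<not> run_straddles r x"
      using first_run_ge[OF r(1)] True by (force simp: run_straddles_def)
    then show ?thesis
      using r by simp
  next
    case False
    then show ?thesis
      using runs_Cons_not_less[of w x] by (cases w) auto
  qed
  also have "\<dots> = straddling_ascents x w"
    using assms by (simp add: straddling_ascents_eq_straddling_runs)
  finally show ?thesis .
qed

fun sum_splits :: "(nat list \<Rightarrow> nat \<Rightarrow> nat list \<Rightarrow> nat) \<Rightarrow> nat list \<Rightarrow> nat list \<Rightarrow> nat" where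
  "sum_splits f u [] = 0"
| "sum_splits f u (x # v) = f u x v + sum_splits f (u @ [x]) v"

lemma sum_splits_straddling_prefix_Cons:
  "u \<noteq> [] \<Longrightarrow> sum_splits (\<lambda>u x v. straddling_ascents x u) (a # u) s
     = sum_splits (\<lambda>u x v. straddling_ascents x u) u s + (\<Sum>i\<leftarrow>s. if a < i \<and> i < hd u then 1 else 0)"
  by (induction s arbitrary: u) (auto simp: straddling_ascents_Cons)

lemma sum_splits_prefix_indep:
  "sum_splits (\<lambda>u x v. g x v) u s = sum_splits (\<lambda>u x v. g x v) u' s"
  by (induction s arbitrary: u u') auto

lemma lsg_eq_sum_splits: "distinct w \<Longrightarrow> lsg w = sum_splits (\<lambda>u x v. straddling_ascents x u) [] w"
proof (induction w)
  case (Cons x w)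
  show ?case
  proof (cases w)
    case Nil
    then show ?thesis
      using lsg_at_Cons_self[OF Cons.prems] by (simp add: lsg_def)
  next
    case (Cons y s)
    have "lsg (x # w) = (\<Sum>i\<in>set w. lsg_at w i + (if x < i \<and> i < hd w then 1 else 0))"
      using Cons.prems lsg_at_Cons_self lsg_at_Cons by (simp add: lsg_def)
    also have "\<dots> = lsg w + (\<Sum>i\<leftarrow>s. if x < i \<and> i < y then 1 else 0)"
      using Cons.prems Cons by (simp add: lsg_def sum.distrib sum.distinct_set_conv_list)
    finally show ?thesis
      using Cons.IH Cons.prems Cons sum_splits_straddling_prefix_Cons[of "[y]" x s] by simp
  qed
qed (simp add: lsg_def)

lemma rsg_eq_sum_splits: "distinct w \<Longrightarrow> rsg w = sum_splits (\<lambda>u x v. straddling_ascents x v) [] w"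
proof (induction w)
  case (Cons x w)
  have "rsg (x # w) = straddling_ascents x w + rsg w"
    using Cons.prems rsg_at_Cons_self rsg_at_Cons by (simp add: rsg_def)
  then show ?case
    using Cons sum_splits_prefix_indep[of _ "[x]" w "[]"] by simp
qed (simp add: rsg_def)

section \<open>Marked words\<close>

abbreviation isolated :: "nat \<Rightarrow> nat list \<Rightarrow> bool" where
  "isolated N \<equiv> successively (\<lambda>a b. a \<noteq> N \<or> b \<noteq> N)"

definition marked_words :: "nat \<Rightarrow> nat set \<Rightarrow> nat \<Rightarrow> nat list set" where
  "marked_words N A h = {c. c \<noteq> [] \<and> hd c = N \<and> isolated N c
     \<and> distinct (removeAll N c) \<and> set (removeAll N c) = A \<and> count_list c N = Suc h}"

definition marked_wt :: "nat \<Rightarrow> nat list \<Rightarrow> nat \<Rightarrow> nat list \<Rightarrow> nat" where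
  "marked_wt N u x v = (if x = N then 0 else
     (if u \<noteq> [] \<and> \<not> last u < x then 1 else 0)
     + 2 * straddling_ascents x u + straddling_ascents x v)"

definition marked_stat :: "nat \<Rightarrow> nat list \<Rightarrow> nat" where
  "marked_stat N c = sum_splits (marked_wt N) [] c"

lemma sum_splits_cong:
  assumes "\<And>u x v. x \<in> set s \<Longrightarrow> f (p @ u) x v = g (q @ u) x v"
  shows "sum_splits f (p @ u) s = sum_splits g (q @ u) s"
  using assms by (induction s arbitrary: u) auto

lemma sum_splits_add:
  "sum_splits (\<lambda>u x v. f u x v + g u x v) p s = sum_splits f p s + sum_splits g p s"
  by (induction s arbitrary: p) auto

lemma sum_splits_mult:
  "sum_splits (\<lambda>u x v. c * f u x v) p s = c * sum_splits f p s"
  by (induction s arbitrary: p) (auto simp: algebra_simps)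

lemma sum_splits_append:
  "sum_splits f p (xs @ ys) = sum_splits (\<lambda>u x v. f u x (v @ ys)) p xs + sum_splits f (p @ xs) ys"
  by (induction xs arbitrary: p) auto

lemma sum_splits_descents:
  "u \<noteq> [] \<Longrightarrow> sum_splits (\<lambda>u x v. if u \<noteq> [] \<and> \<not> last u < x then 1 else 0) u s = descents (last u # s)"
  by (induction s arbitrary: u) auto

lemma marked_stat_Cons_marker:
  assumes "distinct w" "w \<noteq> []" "\<forall>x\<in>set w. x < N"
  shows "marked_stat N (N # w) = Suc (run w - 1 + 2 * lsg w + rsg w)"
proof -
  have "marked_stat N (N # w) = sum_splits (marked_wt N) ([N] @ []) w"
    by (simp add: marked_stat_def marked_wt_def)
  also have "\<dots> = sum_splits (\<lambda>u x v. (if u \<noteq> [] \<and> \<not> last u < x then 1 else 0)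
      + 2 * straddling_ascents x (tl u) + straddling_ascents x v) ([N] @ []) w"
    using assms(3) by (intro sum_splits_cong) (auto simp: marked_wt_def straddling_ascents_Cons)
  also have "\<dots> = descents (N # w) + 2 * sum_splits (\<lambda>u x v. straddling_ascents x u) [] w
      + sum_splits (\<lambda>u x v. straddling_ascents x v) [] w"
    using sum_splits_cong[of w "\<lambda>u x v. straddling_ascents x (tl u)" "[N]"
        "\<lambda>u x v. straddling_ascents x u" "[]" "[]"]
      sum_splits_prefix_indep[of "\<lambda>x v. straddling_ascents x v" "[N]" w "[]"]
      sum_splits_descents[of "[N]" w]
    by (simp add: sum_splits_add sum_splits_mult)
  finally show ?thesis
    using assms lsg_eq_sum_splits rsg_eq_sum_splits run_minus_1_eq_descents
    by (cases w) auto
qed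

lemma bij_betw_Cons_marker:
  assumes "N \<notin> A"
  shows "bij_betw (Cons N) (permutations_of_set A) (marked_words N A 0)"
proof (rule bij_betw_byWitness[where f' = tl])
  show "Cons N ` permutations_of_set A \<subseteq> marked_words N A 0"
  proof
    fix c assume "c \<in> Cons N ` permutations_of_set A"
    then obtain w where "c = N # w" "set w = A" "distinct w"
      by (auto simp: permutations_of_set_def)
    moreover have "isolated N (N # w)" if "N \<notin> set w" for w
      using that by (induction w) (auto simp: successively_Cons)
    ultimately show "c \<in> marked_words N A 0"
      using assms by (simp add: marked_words_def)
  qed
  show "tl ` marked_words N A 0 \<subseteq> permutations_of_set A"
  proof
    fix w assume "w \<in> tl ` marked_words N A 0"
    then obtain c where c: "c \<in> marked_words N A 0" "w = tl c"
      by blast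
    then have "c = N # w" "N \<notin> set w"
      by (cases c; auto simp: marked_words_def count_list_0_iff)+
    then have "removeAll N c = w"
      by simp
    moreover have "set (removeAll N c) = A" "distinct (removeAll N c)"
      using c(1) by (simp_all add: marked_words_def del: set_removeAll)
    ultimately show "w \<in> permutations_of_set A"
      by (simp add: permutations_of_set_def)
  qed
qed (auto simp: marked_words_def neq_Nil_conv)

lemma marked_words_subset: "c \<in> marked_words N A h \<Longrightarrow> set c \<subseteq> insert N A"
  by (auto simp: marked_words_def)

lemma marked_words_split_marker:
  assumes "xs @ N # ys \<in> marked_words N A h"
  shows "isolated N xs" "isolated N ys" "xs \<noteq> [] \<Longrightarrow> last xs \<noteq> N" "ys \<noteq> [] \<Longrightarrow> hd ys \<noteq> N"
    "xs \<noteq> [] \<Longrightarrow> hd xs = N" "distinct (removeAll N xs @ removeAll N ys)"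
    "set (removeAll N xs) \<union> set (removeAll N ys) = A" "count_list xs N + count_list ys N = h"
  using assms by (auto simp: marked_words_def successively_append_iff successively_Cons)

lemma finite_marked_words:
  assumes "finite A"
  shows "finite (marked_words N A h)"
proof (rule finite_subset)
  show "marked_words N A h \<subseteq> {c. set c \<subseteq> insert N A \<and> length c = card A + Suc h}"
  proof
    fix c assume c: "c \<in> marked_words N A h"
    have "length (removeAll N c) + count_list c N = length c"
      by (induction c) auto
    moreover have "length (removeAll N c) = card A"
      using c distinct_card[of "removeAll N c"] by (simp add: marked_words_def)
    ultimately show "c \<in> {c. set c \<subseteq> insert N A \<and> length c = card A + Suc h}"
      using c by (auto simp: marked_words_def)
  qed
  show "finite {c. set c \<subseteq> insert N A \<and> length c = card A + Suc h}"
    using assms by (simp add: finite_lists_length_eq)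
qed

lemma marked_words_empty: "marked_words N {} h = (if h = 0 then {[N]} else {})"
proof -
  have "c = [N] \<and> h = 0" if c: "c \<in> marked_words N {} h" for c
  proof -
    obtain v where v: "c = N # v" "set v \<subseteq> {N}" "isolated N (N # v)" "count_list c N = Suc h"
      using c by (cases c) (auto simp: marked_words_def)
    then have "v = []"
      by (cases v) (auto simp: successively_Cons)
    then show ?thesis
      using v by simp
  qed
  then show ?thesis
    by (auto simp: marked_words_def)
qed

lemma marked_stat_pos:
  assumes "c \<in> marked_words N A h" "A \<noteq> {}" "\<forall>x\<in>A. x < N"
  shows "0 < marked_stat N c"
proof -
  obtain y v where c: "c = N # y # v"
    using assms(1,2) by (cases c rule: remdups_adj.cases) (auto simp: marked_words_def)
  then have "y \<in> A"
    using assms(1) by (auto simp: marked_words_def)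
  then have "0 < marked_wt N [N] y v"
    using assms(3) by (auto simp: marked_wt_def)
  then show ?thesis
    by (simp add: marked_stat_def c marked_wt_def)
qed

section \<open>Inserting the largest letter\<close>

lemma straddling_ascents_append:
  "straddling_ascents x (us @ vs) = straddling_ascents x us + straddling_ascents x vs
     + (if us \<noteq> [] \<and> vs \<noteq> [] \<and> last us < x \<and> x < hd vs then 1 else 0)"
  by (induction us) (auto simp: straddling_ascents_Cons)

lemma straddling_ascents_above: "\<forall>y\<in>set l. x < y \<Longrightarrow> straddling_ascents x l = 0"
  by (induction x l rule: straddling_ascents.induct) auto

lemma straddling_ascents_block_above:
  assumes "l \<noteq> []" "\<forall>y\<in>set l. x < y"
  shows "straddling_ascents x (u @ l @ v)
    = straddling_ascents x u + (if u \<noteq> [] \<and> last u < x then 1 else 0) + straddling_ascents x v"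
proof -
  have "\<not> last l < x"
    using assms last_in_set by fastforce
  then show ?thesis
    using assms straddling_ascents_above[OF assms(2)]
    by (auto simp: straddling_ascents_append[of x u] straddling_ascents_append[of x l])
qed

lemma straddling_ascents_count_markers:
  assumes "isolated N l" "set l \<subseteq> insert N {..<m}" "m < N"
  shows "straddling_ascents m l = count_list l N - (if l \<noteq> [] \<and> hd l = N then 1 else 0)"
  using assms by (induction m l rule: straddling_ascents.induct) auto

lemma marked_stat_substitute_block:
  assumes "P \<noteq> []" "\<forall>y\<in>set P. m \<le> y" "set xs \<subseteq> insert N {..<m}" "set ys \<subseteq> insert N {..<m}" "m < N"
  shows "marked_stat N (xs @ P @ ys)
    = marked_stat N (xs @ N # ys) + sum_splits (\<lambda>u x v. marked_wt N u x (v @ ys)) xs P"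
proof -
  have stat: "marked_stat N (xs @ Q @ ys) = sum_splits (\<lambda>u x v. marked_wt N u x (v @ Q @ ys)) [] xs
      + sum_splits (\<lambda>u x v. marked_wt N u x (v @ ys)) xs Q
      + sum_splits (marked_wt N) (xs @ Q) ys" for Q
    by (simp add: marked_stat_def sum_splits_append)
  have above: "Q \<noteq> [] \<and> (\<forall>y\<in>set Q. x < y) \<and> \<not> last Q < x"
    if "x \<in> set (xs @ ys)" "x \<noteq> N" "Q \<in> {P, [N]}" for x Q
    using that assms last_in_set[OF assms(1)] by fastforce
  have "sum_splits (\<lambda>u x v. marked_wt N u x (v @ P @ ys)) ([] @ []) xs
      = sum_splits (\<lambda>u x v. marked_wt N u x (v @ [N] @ ys)) ([] @ []) xs"
  proof (rule sum_splits_cong)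
    fix u x v assume "x \<in> set xs"
    then show "marked_wt N ([] @ u) x (v @ P @ ys) = marked_wt N ([] @ u) x (v @ [N] @ ys)"
      using above[of x P] above[of x "[N]"] straddling_ascents_block_above[of P x v ys]
        straddling_ascents_block_above[of "[N]" x v ys]
      by (simp add: marked_wt_def)
  qed
  moreover have "sum_splits (marked_wt N) ((xs @ P) @ []) ys
      = sum_splits (marked_wt N) ((xs @ [N]) @ []) ys"
  proof (rule sum_splits_cong)
    fix u x v assume "x \<in> set ys"
    then show "marked_wt N ((xs @ P) @ u) x v = marked_wt N ((xs @ [N]) @ u) x v"
      using above[of x P] above[of x "[N]"] straddling_ascents_block_above[of P x xs u]
        straddling_ascents_block_above[of "[N]" x xs u]
      by (cases "x = N"; cases "u = []") (auto simp: marked_wt_def)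
  qed
  ultimately show ?thesis
    using stat[of P] stat[of "[N]"] by (simp add: marked_wt_def)
qed

fun piece :: "nat \<Rightarrow> nat \<Rightarrow> bool \<times> bool \<Rightarrow> nat list" where
  "piece N m (a, b) = (if a then [N] else []) @ m # (if b then [N] else [])"

definition placement_wt :: "bool \<Rightarrow> nat \<Rightarrow> nat \<Rightarrow> nat" where
  "placement_wt a j r = (if a then Suc (2 * j + r) else 2 * (j - 1) + r)"

lemma marked_stat_place:
  assumes "m < N" "set xs \<subseteq> insert N {..<m}" "set ys \<subseteq> insert N {..<m}"
    and "isolated N (xs @ N # ys)" "xs \<noteq> [] \<Longrightarrow> hd xs = N" "\<not> a \<Longrightarrow> xs \<noteq> []"
  shows "marked_stat N (xs @ piece N m (a, b) @ ys)
    = marked_stat N (xs @ N # ys) + placement_wt a (count_list xs N) (count_list ys N)"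
proof -
  have iso: "isolated N xs" "isolated N ys" "xs \<noteq> [] \<Longrightarrow> last xs \<noteq> N" "ys \<noteq> [] \<Longrightarrow> hd ys \<noteq> N"
    using assms(4) by (auto simp: successively_append_iff successively_Cons)
  have "xs \<noteq> [] \<Longrightarrow> last xs < m"
    using iso(3) assms(2) last_in_set by fastforce
  moreover have "straddling_ascents m xs = count_list xs N - 1" if "xs \<noteq> []"
    using straddling_ascents_count_markers[OF iso(1) assms(2,1)] assms(5) that by simp
  moreover have "straddling_ascents m ys = count_list ys N"
    using straddling_ascents_count_markers[OF iso(2) assms(3,1)] iso(4) by auto
  moreover have "straddling_ascents m (N # ys) = count_list ys N"
    using straddling_ascents_count_markers[of N "N # ys" m] iso(2,4) assms(1,3)
    by (auto simp: successively_Cons)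
  moreover have "straddling_ascents m (xs @ [N]) = count_list xs N"
  proof -
    have "isolated N (xs @ [N])"
      using assms(4) successively_append_iff[of _ "xs @ [N]" ys] by simp
    then show ?thesis
      using straddling_ascents_count_markers[of N "xs @ [N]" m] assms(1,2,5) by (cases xs) auto
  qed
  ultimately have "sum_splits (\<lambda>u x v. marked_wt N u x (v @ ys)) xs (piece N m (a, b))
      = placement_wt a (count_list xs N) (count_list ys N)"
    using assms(1,6) by (cases a; cases b) (auto simp: marked_wt_def placement_wt_def)
  moreover have "\<forall>y\<in>set (piece N m (a, b)). m \<le> y"
    using assms(1) by auto
  ultimately show ?thesis
    using marked_stat_substitute_block[of "piece N m (a, b)" m xs N ys] assms(1-3) by simp
qed

(* Without a marker before m, the replaced marker cannot be the leading one. *)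
definition placement_slots :: "nat \<Rightarrow> nat set \<Rightarrow> nat \<Rightarrow> bool \<times> bool \<Rightarrow> (nat list \<times> nat list) set" where
  "placement_slots N A h = (\<lambda>(a, b). {(xs, ys). of_bool a + of_bool b \<le> Suc h
     \<and> xs @ N # ys \<in> marked_words N A (Suc h - (of_bool a + of_bool b)) \<and> (a \<or> xs \<noteq> [])})"

definition placements :: "nat \<Rightarrow> nat set \<Rightarrow> nat \<Rightarrow> ((bool \<times> bool) \<times> nat list \<times> nat list) set" where
  "placements N A h = (SIGMA p:UNIV. placement_slots N A h p)"

definition place :: "nat \<Rightarrow> nat \<Rightarrow> (bool \<times> bool) \<times> nat list \<times> nat list \<Rightarrow> nat list" where
  "place N m = (\<lambda>(p, xs, ys). xs @ piece N m p @ ys)"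

definition strip_markers :: "nat \<Rightarrow> nat list \<Rightarrow> nat list \<Rightarrow> (bool \<times> bool) \<times> nat list \<times> nat list" where
  "strip_markers N xs ys = (let a = (xs \<noteq> [] \<and> last xs = N); b = (ys \<noteq> [] \<and> hd ys = N)
     in ((a, b), if a then butlast xs else xs, if b then tl ys else ys))"

definition unplace :: "nat \<Rightarrow> nat \<Rightarrow> nat list \<Rightarrow> (bool \<times> bool) \<times> nat list \<times> nat list" where
  "unplace N m c = strip_markers N (takeWhile (\<lambda>x. x \<noteq> m) c) (tl (dropWhile (\<lambda>x. x \<noteq> m) c))"

lemma unplace_append_Cons: "m \<notin> set xs \<Longrightarrow> unplace N m (xs @ m # ys) = strip_markers N xs ys"
proof -
  assume "m \<notin> set xs"
  then have "takeWhile (\<lambda>x. x \<noteq> m) (xs @ m # ys) = xs"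
    "dropWhile (\<lambda>x. x \<noteq> m) (xs @ m # ys) = m # ys"
    by (induction xs) auto
  then show ?thesis
    by (simp add: unplace_def)
qed

lemma unplace_place:
  assumes "m \<notin> set xs" "m \<noteq> N" "xs \<noteq> [] \<Longrightarrow> last xs \<noteq> N" "ys \<noteq> [] \<Longrightarrow> hd ys \<noteq> N"
  shows "unplace N m (place N m ((a, b), xs, ys)) = ((a, b), xs, ys)"
proof -
  define pre where "pre = (if a then [N] else [])"
  define post where "post = (if b then [N] else [])"
  have "m \<notin> set (xs @ pre)"
    using assms(1,2) by (simp add: pre_def)
  have "place N m ((a, b), xs, ys) = (xs @ pre) @ m # post @ ys"
    by (simp add: place_def pre_def post_def)
  then have "unplace N m (place N m ((a, b), xs, ys)) = unplace N m ((xs @ pre) @ m # post @ ys)"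
    by simp
  also have "\<dots> = ((a, b), xs, ys)"
    unfolding unplace_append_Cons[OF \<open>m \<notin> set (xs @ pre)\<close>]
    using assms(3,4) by (cases a; cases b) (auto simp: strip_markers_def pre_def post_def Let_def)
  finally show ?thesis .
qed

lemma isolated_strip_piece:
  assumes "isolated N (xs @ piece N m (a, b) @ ys)" "m \<noteq> N"
    and "a \<or> xs \<noteq> [] \<and> last xs \<noteq> N" "b \<or> ys = [] \<or> hd ys \<noteq> N"
  shows "isolated N (xs @ N # ys)"
  using assms by (cases a; cases b) (auto simp: successively_append_iff successively_Cons)

lemma place_in_marked_words:
  assumes "d \<in> placements N A h" "m \<notin> A" "m \<noteq> N"
  shows "place N m d \<in> marked_words N (insert m A) h"
proof -
  obtain a b xs ys where d: "d = ((a, b), xs, ys)"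
    by (cases d) auto
  have ab: "of_bool a + of_bool b \<le> Suc h" and xs: "\<not> a \<Longrightarrow> xs \<noteq> []"
    and c': "xs @ N # ys \<in> marked_words N A (Suc h - (of_bool a + of_bool b))"
    using assms(1) by (auto simp: placements_def placement_slots_def d)
  note split = marked_words_split_marker[OF c']
  have "m \<notin> set (removeAll N xs)" "m \<notin> set (removeAll N ys)"
    using split(7) assms(2) by auto
  then show ?thesis
    using split ab xs assms(3)
    by (cases a; cases b)
      (auto simp: d place_def marked_words_def successively_append_iff successively_Cons hd_append)
qed

lemma unplace_in_placements:
  assumes c: "c \<in> marked_words N (insert m A) h" and "m \<notin> A" "m \<noteq> N"
  shows "unplace N m c \<in> placements N A h" "place N m (unplace N m c) = c"
proof -
  have "m \<in> set c"
    using c assms(3) by (auto simp: marked_words_def)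
  then obtain xs ys where c_eq: "c = xs @ m # ys" and m_xs: "m \<notin> set xs"
    by (blast dest: split_list_first)
  define a where "a = (xs \<noteq> [] \<and> last xs = N)"
  define b where "b = (ys \<noteq> [] \<and> hd ys = N)"
  define xs' where "xs' = (if a then butlast xs else xs)"
  define ys' where "ys' = (if b then tl ys else ys)"
  have unpl: "unplace N m c = ((a, b), xs', ys')"
    by (simp add: c_eq unplace_append_Cons[OF m_xs] strip_markers_def
        a_def b_def xs'_def ys'_def Let_def)
  have "xs = xs' @ (if a then [N] else [])" "ys = (if b then [N] else []) @ ys'"
    by (auto simp: xs'_def ys'_def a_def b_def)
  then have c_eq': "c = xs' @ piece N m (a, b) @ ys'"
    using c_eq by simp
  then show "place N m (unplace N m c) = c"
    unfolding unpl place_def by simp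
  have "xs \<noteq> []"
    using c assms(3) by (auto simp: marked_words_def c_eq)
  then have xs': "a \<or> xs' \<noteq> [] \<and> last xs' \<noteq> N"
    by (simp add: xs'_def a_def)
  have ys': "b \<or> ys' = [] \<or> hd ys' \<noteq> N"
    by (auto simp: ys'_def b_def)
  have c_props: "hd c = N" "isolated N c" "distinct (removeAll N c)"
    "set (removeAll N c) = insert m A" "count_list c N = Suc h"
    using c by (auto simp: marked_words_def)
  have "isolated N (xs' @ N # ys')"
    using isolated_strip_piece[OF _ assms(3) xs' ys'] c_props(2) c_eq' by simp
  moreover have "hd (xs' @ N # ys') = N"
    using c_props(1) by (auto simp: c_eq' hd_append split: if_splits)
  moreover have "removeAll N c = removeAll N xs' @ m # removeAll N ys'"
    using assms(3) by (cases a; cases b) (simp_all add: c_eq')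
  then have "distinct (removeAll N (xs' @ N # ys'))" "set (removeAll N (xs' @ N # ys')) = A"
    using c_props(3,4) assms(2) by auto
  moreover have "count_list c N = count_list xs' N + count_list ys' N + of_bool a + of_bool b"
    using assms(3) by (cases a; cases b) (simp_all add: c_eq')
  then have "count_list (xs' @ N # ys') N = Suc (Suc h - (of_bool a + of_bool b))"
    "of_bool a + of_bool b \<le> Suc h"
    using c_props(5) by simp_all
  ultimately show "unplace N m c \<in> placements N A h"
    using xs' unfolding unpl placements_def placement_slots_def marked_words_def by blast
qed

lemma bij_betw_place:
  assumes "m \<notin> A" "m \<noteq> N"
  shows "bij_betw (place N m) (placements N A h) (marked_words N (insert m A) h)"
proof (rule bij_betw_byWitness[where f' = "unplace N m"])
  show "\<forall>d\<in>placements N A h. unplace N m (place N m d) = d"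
  proof
    fix d assume d: "d \<in> placements N A h"
    then obtain a b xs ys k where "d = ((a, b), xs, ys)" "xs @ N # ys \<in> marked_words N A k"
      by (auto simp: placements_def placement_slots_def)
    with marked_words_split_marker[OF this(2)] assms show "unplace N m (place N m d) = d"
      by (auto intro: unplace_place)
  qed
qed (use assms place_in_marked_words unplace_in_placements in blast)+

lemma marked_stat_place_in_placements:
  assumes "((a, b), xs, ys) \<in> placements N A h" "\<forall>x\<in>A. x < m" "m < N"
  shows "marked_stat N (place N m ((a, b), xs, ys))
    = marked_stat N (xs @ N # ys) + placement_wt a (count_list xs N) (count_list ys N)"
proof -
  obtain k where c: "xs @ N # ys \<in> marked_words N A k" and "\<not> a \<Longrightarrow> xs \<noteq> []"
    using assms(1) by (auto simp: placements_def placement_slots_def)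
  moreover have "set (xs @ N # ys) \<subseteq> insert N {..<m}"
    using marked_words_subset[OF c] assms(2) by auto
  ultimately show ?thesis
    using marked_stat_place[of m N xs ys a b] marked_words_split_marker[OF c] assms(3)
    by (simp add: place_def marked_words_def)
qed

section \<open>Summing over the replaced marker\<close>

definition marker_splits :: "nat \<Rightarrow> nat list \<Rightarrow> (nat list \<times> nat list) set" where
  "marker_splits N c = {(xs, ys). xs @ N # ys = c}"

lemma marker_splits_Nil: "marker_splits N [] = {}"
  by (simp add: marker_splits_def)

lemma marker_splits_Cons:
  "marker_splits N (x # c)
    = (if x = N then {([], c)} else {}) \<union> (\<lambda>(xs, ys). (x # xs, ys)) ` marker_splits N c"
proof -
  have "(xs, ys) \<in> marker_splits N (x # c) \<longleftrightarrow>
      (xs = [] \<and> x = N \<and> ys = c) \<or> (\<exists>xs'. xs = x # xs' \<and> (xs', ys) \<in> marker_splits N c)" for xs ys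
    by (cases xs) (auto simp: marker_splits_def)
  then show ?thesis
    by (intro set_eqI) (force simp: image_iff split: prod.splits)
qed

lemma finite_marker_splits: "finite (marker_splits N c)"
  by (induction c) (simp_all add: marker_splits_Nil marker_splits_Cons)

lemma sum_marker_splits:
  "(\<Sum>(xs, ys)\<in>marker_splits N c. g (count_list xs N) (count_list ys N))
     = (\<Sum>j<count_list c N. g j (count_list c N - Suc j))"
proof (induction c arbitrary: g)
  case (Cons x c)
  let ?shift = "\<lambda>(xs, ys). (x # xs, ys)"
  have inj: "inj_on ?shift (marker_splits N c)"
    by (auto simp: inj_on_def)
  have shifted: "(\<Sum>(xs, ys)\<in>?shift ` marker_splits N c. g (count_list xs N) (count_list ys N))
      = (\<Sum>j<count_list c N. g (count_list [x] N + j) (count_list c N - Suc j))"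
  proof -
    have "(\<Sum>(xs, ys)\<in>?shift ` marker_splits N c. g (count_list xs N) (count_list ys N))
        = (\<Sum>(xs, ys)\<in>marker_splits N c.
            g (count_list [x] N + count_list xs N) (count_list ys N))"
      by (subst sum.reindex[OF inj]) (simp add: case_prod_beta)
    then show ?thesis
      using Cons.IH[of "\<lambda>j. g (count_list [x] N + j)"] by simp
  qed
  show ?case
  proof (cases "x = N")
    case True
    have "([], c) \<notin> ?shift ` marker_splits N c"
      by auto
    then have "(\<Sum>(xs, ys)\<in>marker_splits N (x # c). g (count_list xs N) (count_list ys N))
        = g 0 (count_list c N) + (\<Sum>j<count_list c N. g (Suc j) (count_list c N - Suc j))"
      using True shifted finite_marker_splits[of N c] by (simp add: marker_splits_Cons)
    also have "\<dots> = (\<Sum>j<Suc (count_list c N). g j (Suc (count_list c N) - Suc j))"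
      by (simp only: sum.lessThan_Suc_shift) simp
    finally show ?thesis
      using True by simp
  next
    case False
    then show ?thesis
      using shifted by (simp add: marker_splits_Cons)
  qed
qed (simp add: marker_splits_Nil)

lemma sum_marker_splits_if:
  assumes "c \<noteq> []" "hd c = N"
  shows "(\<Sum>(xs, ys)\<in>{(xs, ys) \<in> marker_splits N c. a \<or> xs \<noteq> []}.
      g (count_list xs N) (count_list ys N))
     = (\<Sum>j<count_list c N. if a \<or> j \<noteq> 0 then g j (count_list c N - Suc j) else 0)"
proof -
  have "xs \<noteq> [] \<longleftrightarrow> count_list xs N \<noteq> 0" if "(xs, ys) \<in> marker_splits N c" for xs ys
    using that assms by (cases xs) (auto simp: marker_splits_def)
  then have "(\<Sum>(xs, ys)\<in>{(xs, ys) \<in> marker_splits N c. a \<or> xs \<noteq> []}.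
      g (count_list xs N) (count_list ys N))
      = (\<Sum>(xs, ys)\<in>marker_splits N c.
          (\<lambda>j r. if a \<or> j \<noteq> 0 then g j r else 0) (count_list xs N) (count_list ys N))"
    by (auto simp: sum.inter_filter[OF finite_marker_splits, symmetric] case_prod_beta
        intro!: sum.cong)
  then show ?thesis
    using sum_marker_splits[of "\<lambda>j r. if a \<or> j \<noteq> 0 then g j r else 0" N c] by simp
qed

lemma sum_by_marker_splits:
  assumes "finite S"
  shows "(\<Sum>(xs, ys)\<in>{(xs, ys). xs @ N # ys \<in> S \<and> P xs}. g xs ys)
     = (\<Sum>c\<in>S. \<Sum>(xs, ys)\<in>{(xs, ys) \<in> marker_splits N c. P xs}. g xs ys)"
proof -
  define Q where "Q c = {(xs, ys) \<in> marker_splits N c. P xs}" for c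
  have "\<forall>c\<in>S. finite (Q c)"
    using finite_marker_splits by (auto simp: Q_def intro: finite_subset[rotated])
  then have "(\<Sum>c\<in>S. \<Sum>(xs, ys)\<in>Q c. g xs ys) = (\<Sum>(c, p)\<in>Sigma S Q. case p of (xs, ys) \<Rightarrow> g xs ys)"
    by (rule sum.Sigma[OF assms])
  also have "\<dots> = (\<Sum>(xs, ys)\<in>snd ` Sigma S Q. g xs ys)"
    by (rule sum.reindex_cong[symmetric, where l = snd])
      (auto simp: inj_on_def Q_def marker_splits_def)
  also have "snd ` Sigma S Q = {(xs, ys). xs @ N # ys \<in> S \<and> P xs}"
    by (auto simp: Q_def marker_splits_def image_iff)
  finally show ?thesis
    by (simp add: Q_def)
qed

lemma finite_marker_positions: "finite S \<Longrightarrow> finite {(xs, ys). xs @ (N::nat) # ys \<in> S \<and> P xs}"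
  by (rule finite_subset[of _ "\<Union>c\<in>S. marker_splits N c"])
    (auto simp: finite_marker_splits, auto simp: marker_splits_def)

definition placed_sum :: "(nat \<Rightarrow> 'a::comm_monoid_add) \<Rightarrow> nat \<Rightarrow> nat set \<Rightarrow> bool \<Rightarrow> nat \<Rightarrow> 'a" where
  "placed_sum f N A a k = (\<Sum>c\<in>marked_words N A k. \<Sum>j<count_list c N.
     if a \<or> j \<noteq> 0 then f (marked_stat N c + placement_wt a j (count_list c N - Suc j)) else 0)"

lemma sum_placement_slots:
  assumes "finite A"
  shows "(\<Sum>(xs, ys)\<in>placement_slots N A h (a, b).
      f (marked_stat N (xs @ N # ys) + placement_wt a (count_list xs N) (count_list ys N)))
    = (if of_bool a + of_bool b \<le> Suc h
       then placed_sum f N A a (Suc h - (of_bool a + of_bool b)) else 0)"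
proof (cases "of_bool a + of_bool b \<le> Suc h")
  case True
  let ?S = "marked_words N A (Suc h - (of_bool a + of_bool b))"
  have "(\<Sum>(xs, ys)\<in>placement_slots N A h (a, b).
      f (marked_stat N (xs @ N # ys) + placement_wt a (count_list xs N) (count_list ys N)))
    = (\<Sum>c\<in>?S. \<Sum>(xs, ys)\<in>{(xs, ys) \<in> marker_splits N c. a \<or> xs \<noteq> []}.
      f (marked_stat N (xs @ N # ys) + placement_wt a (count_list xs N) (count_list ys N)))"
  proof -
    have "placement_slots N A h (a, b) = {(xs, ys). xs @ N # ys \<in> ?S \<and> (a \<or> xs \<noteq> [])}"
      using True by (auto simp: placement_slots_def)
    then show ?thesis
      by (simp only: sum_by_marker_splits[OF finite_marked_words[OF assms]])
  qed
  also have "\<dots> = (\<Sum>c\<in>?S. \<Sum>(xs, ys)\<in>{(xs, ys) \<in> marker_splits N c. a \<or> xs \<noteq> []}.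
      f (marked_stat N c + placement_wt a (count_list xs N) (count_list ys N)))"
    by (intro sum.cong refl) (auto simp: marker_splits_def)
  also have "\<dots> = (\<Sum>c\<in>?S. \<Sum>j<count_list c N.
      if a \<or> j \<noteq> 0 then f (marked_stat N c + placement_wt a j (count_list c N - Suc j)) else 0)"
    by (intro sum.cong refl sum_marker_splits_if) (auto simp: marked_words_def)
  finally show ?thesis
    using True by (simp add: placed_sum_def)
qed (simp add: placement_slots_def)

lemma sum_UNIV_bool_pair:
  "(\<Sum>p\<in>UNIV. g p) = g (False, False) + g (False, True) + g (True, False) + g (True, True)"
proof -
  have U: "(UNIV :: (bool \<times> bool) set)
      = {(False, False), (False, True), (True, False), (True, True)}"
    by auto
  show ?thesis
    unfolding U by (simp add: add.assoc)
qed

lemma sum_marked_words_insert: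
  assumes "finite A" "\<forall>x\<in>A. x < m" "m < N"
  shows "(\<Sum>c\<in>marked_words N (insert m A) h. f (marked_stat N c))
    = placed_sum f N A False (Suc h) + placed_sum f N A False h + placed_sum f N A True h
      + (if h = 0 then 0 else placed_sum f N A True (h - 1))"
proof -
  have "m \<notin> A" "m \<noteq> N"
    using assms by auto
  have "(\<Sum>c\<in>marked_words N (insert m A) h. f (marked_stat N c))
      = (\<Sum>d\<in>placements N A h. f (marked_stat N (place N m d)))"
    by (rule sum.reindex_bij_betw[OF bij_betw_place[OF \<open>m \<notin> A\<close> \<open>m \<noteq> N\<close>], symmetric])
  also have "\<dots> = (\<Sum>((a, b), xs, ys)\<in>placements N A h.
      f (marked_stat N (xs @ N # ys) + placement_wt a (count_list xs N) (count_list ys N)))"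
    by (intro sum.cong refl) (auto simp: marked_stat_place_in_placements[OF _ assms(2,3)])
  also have "\<dots> = (\<Sum>(a, b)\<in>UNIV. \<Sum>(xs, ys)\<in>placement_slots N A h (a, b).
      f (marked_stat N (xs @ N # ys) + placement_wt a (count_list xs N) (count_list ys N)))"
  proof -
    have "\<forall>p\<in>UNIV. finite (placement_slots N A h p)"
      by (auto simp: placement_slots_def finite_marker_positions finite_marked_words assms(1))
    from sum.Sigma[OF finite_UNIV this, of "\<lambda>p q. f (marked_stat N (fst q @ N # snd q)
        + placement_wt (fst p) (count_list (fst q) N) (count_list (snd q) N))"]
    show ?thesis
      by (simp add: placements_def split_def)
  qed
  finally show ?thesis
    by (cases h) (simp_all add: sum_placement_slots[OF assms(1)] sum_UNIV_bool_pair)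
qed

section \<open>Generating functions\<close>

lemma sum_placement_wt:
  "(\<Sum>j<Suc k. if a \<or> j \<noteq> 0 then q ^ placement_wt a j (k - j) else 0)
     = (if a then desc_weight q k else asc_weight q (k :: nat))"
proof (cases a)
  case True
  then have "(\<Sum>j<Suc k. if a \<or> j \<noteq> 0 then q ^ placement_wt a j (k - j) else 0)
      = (\<Sum>j<Suc k. q ^ Suc (2 * j + (k - j)))"
    by (simp add: placement_wt_def)
  also have "\<dots> = (\<Sum>j<Suc k. q ^ Suc k * q ^ j)"
  proof (intro sum.cong refl)
    fix j assume "j \<in> {..<Suc k}"
    then have "Suc (2 * j + (k - j)) = Suc k + j"
      by auto
    then show "q ^ Suc (2 * j + (k - j)) = q ^ Suc k * q ^ j"
      by (simp only: power_add)
  qed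
  also have "\<dots> = desc_weight q k"
    by (simp only: desc_weight_def qint_def sum_distrib_left)
  finally show ?thesis
    using True by simp
next
  case False
  then have "(\<Sum>j<Suc k. if a \<or> j \<noteq> 0 then q ^ placement_wt a j (k - j) else 0)
      = (\<Sum>i<k. q ^ (2 * i + (k - Suc i)))"
    by (simp only: sum.lessThan_Suc_shift) (simp add: placement_wt_def)
  also have "\<dots> = (\<Sum>i<k. q ^ (k - 1) * q ^ i)"
  proof (intro sum.cong refl)
    fix i assume "i \<in> {..<k}"
    then have "2 * i + (k - Suc i) = (k - 1) + i"
      by auto
    then show "q ^ (2 * i + (k - Suc i)) = q ^ (k - 1) * q ^ i"
      by (simp only: power_add)
  qed
  also have "\<dots> = asc_weight q k"
    by (simp only: asc_weight_def qint_def sum_distrib_left)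
  finally show ?thesis
    using False by simp
qed

(* For A \<noteq> {} the letter after the leading marker contributes a descent, so the
   subtraction is exact (marked_stat_pos). *)
definition marked_gf :: "'a::comm_ring_1 \<Rightarrow> nat \<Rightarrow> nat set \<Rightarrow> nat \<Rightarrow> 'a" where
  "marked_gf q N A h = (\<Sum>c\<in>marked_words N A h. q ^ (marked_stat N c - 1))"

lemma placed_sum_power:
  assumes "A \<noteq> {}" "\<forall>x\<in>A. x < N"
  shows "placed_sum (\<lambda>s. q ^ (s - 1)) N A a k
    = (if a then desc_weight q k else asc_weight q k) * marked_gf q N A k"
proof -
  have "(\<Sum>j<count_list c N.
      if a \<or> j \<noteq> 0
      then q ^ (marked_stat N c + placement_wt a j (count_list c N - Suc j) - 1) else 0)
    = q ^ (marked_stat N c - 1) * (if a then desc_weight q k else asc_weight q k)"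
    if c: "c \<in> marked_words N A k" for c
  proof -
    have "q ^ (marked_stat N c + w - 1) = q ^ (marked_stat N c - 1) * q ^ w" for w
      using marked_stat_pos[OF c assms] by (simp add: power_add[symmetric])
    moreover have "count_list c N = Suc k"
      using c by (simp add: marked_words_def)
    ultimately have "(\<Sum>j<count_list c N.
        if a \<or> j \<noteq> 0
        then q ^ (marked_stat N c + placement_wt a j (count_list c N - Suc j) - 1) else 0)
      = (\<Sum>j<Suc k. q ^ (marked_stat N c - 1)
          * (if a \<or> j \<noteq> 0 then q ^ placement_wt a j (k - j) else 0))"
      by (intro sum.cong) auto
    then show ?thesis
      by (simp only: sum_distrib_left[symmetric] sum_placement_wt)
  qed
  then show ?thesis
    unfolding placed_sum_def marked_gf_def sum_distrib_left
    by (intro sum.cong refl) (simp add: mult.commute)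
qed

lemma marked_gf_insert:
  assumes "finite A" "A \<noteq> {}" "\<forall>x\<in>A. x < m" "m < N"
  shows "marked_gf q N (insert m A) h = asc_weight q (Suc h) * marked_gf q N A (Suc h)
           + (asc_weight q h + desc_weight q h) * marked_gf q N A h
           + (if h = 0 then 0 else desc_weight q (h - 1) * marked_gf q N A (h - 1))"
proof -
  have below: "\<forall>x\<in>A. x < N"
    using assms(3,4) by auto
  show ?thesis
    unfolding marked_gf_def[of q N "insert m A"]
      sum_marked_words_insert[OF assms(1,3,4), where f = "\<lambda>s. q ^ (s - 1)"]
      placed_sum_power[OF assms(2) below]
    by (simp add: algebra_simps)
qed

lemma marked_gf_singleton:
  assumes "m < N"
  shows "marked_gf q N {m} h = closed_gf q 1 h"
proof -
  have empty: "\<forall>x\<in>{}. x < m"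
    by simp
  have "marked_stat N [N] = 0"
    by (simp add: marked_stat_def marked_wt_def)
  then show ?thesis
    unfolding marked_gf_def
      sum_marked_words_insert[OF finite.emptyI empty assms, where f = "\<lambda>s. q ^ (s - 1)"]
    using closed_gf_1[of q h]
    by (cases "h \<le> 1") (auto simp: placed_sum_def marked_words_empty placement_wt_def le_Suc_eq)
qed

lemma marked_gf_eq_closed_gf:
  assumes "finite A" "A \<noteq> {}" "\<forall>x\<in>A. x < N"
  shows "marked_gf q N A h = closed_gf q (card A) h"
  using assms
proof (induction "card A" arbitrary: A h)
  case (Suc n)
  define m where "m = Max A"
  define A' where "A' = A - {m}"
  have "m \<in> A" "\<forall>x\<in>A. x \<le> m"
    using Suc.prems by (simp_all add: m_def)
  then have A: "A = insert m A'" "m \<notin> A'" "finite A'" "\<forall>x\<in>A'. x < m" "m < N"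
    using Suc.prems by (auto simp: A'_def less_le)
  show ?case
  proof (cases "A' = {}")
    case True
    then show ?thesis
      using A marked_gf_singleton by simp
  next
    case False
    have "card A' = n" "n \<ge> 1"
      using Suc.hyps(2) A False by (simp_all add: card_gt_0_iff Suc_le_eq)
    moreover have "\<forall>x\<in>A'. x < N"
      using A by auto
    ultimately have "marked_gf q N A' k = closed_gf q n k" for k
      using Suc.hyps(1)[of A' k] A(3) False by simp
    then have "marked_gf q N (insert m A') h = closed_gf q (Suc n) h"
      unfolding marked_gf_insert[OF A(3) False A(4,5)] closed_gf_Suc[OF \<open>n \<ge> 1\<close>] by simp
    then show ?thesis
      using A \<open>card A' = n\<close> by (simp add: card_insert_disjoint)
  qed
qed simp

theorem theorem3:
  fixes q :: "'a::comm_ring_1" and n :: nat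
  assumes "n \<ge> 1"
  shows "(\<Sum>w\<in>permutations_of_set {1..n}. q ^ (run w - 1 + 2 * lsg w + rsg w)) = qfact q n"
proof -
  define N where "N = Suc n"
  have "run w - 1 + 2 * lsg w + rsg w = marked_stat N (N # w) - 1"
    if "w \<in> permutations_of_set {1..n}" for w
  proof -
    have "distinct w" "set w = {1..n}"
      using that by (auto simp: permutations_of_set_def)
    moreover have "w \<noteq> []"
      using \<open>set w = {1..n}\<close> assms by auto
    ultimately show ?thesis
      using marked_stat_Cons_marker[of w N] by (simp add: N_def)
  qed
  then have "(\<Sum>w\<in>permutations_of_set {1..n}. q ^ (run w - 1 + 2 * lsg w + rsg w))
      = (\<Sum>w\<in>permutations_of_set {1..n}. q ^ (marked_stat N (N # w) - 1))"
    by (intro sum.cong) auto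
  also have "\<dots> = marked_gf q N {1..n} 0"
    unfolding marked_gf_def
    by (rule sum.reindex_bij_betw[OF bij_betw_Cons_marker]) (simp add: N_def)
  also have "\<dots> = closed_gf q n 0"
    using marked_gf_eq_closed_gf[of "{1..n}" N q 0] assms by (simp add: N_def)
  also have "\<dots> = qfact q n"
    using closed_gf_0_right assms .
  finally show ?thesis .
qed

end
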